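(* Let $\beta$ be an uncountable regular ordinal (so $\mathrm{cf}(\beta)>\omega$), let $j\in\{2,3,4\}$ and $k<j$. Then the ordinal space $\beta\cdot j+1$ is not cleavable over $\beta\cdot k+1$.
   Context: A space $X$ is cleavable over $Y$ if for every $A\subseteq X$ there is a continuous $f:X\to Y$ with $f(A)\cap f(X\setminus A)=\emptyset$. Ordinals carry the order topology; $\beta\cdot j$ is ordinal multiplication. *)

theory Defs
  imports "HOL-Analysis.Analysis"
begin

definition cleavable :: "'a topology \<Rightarrow> 'b topology \<Rightarrow> bool" where
  "cleavable X Y \<longleftrightarrow>
     (\<forall>A. A \<subseteq> topspace X \<longrightarrow>
        (\<exists>f. continuous_map X Y f \<and> f ` A \<inter> f ` (topspace X - A) = {}))"

definition order_topology_on :: "'b set \<Rightarrow> ('b \<Rightarrow> 'b \<Rightarrow> bool) \<Rightarrow> 'b topology" where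
  "order_topology_on S le = topology_generated_by
     (insert S ({{x \<in> S. le a x \<and> \<not> le x a} | a. a \<in> S} \<union>
                {{x \<in> S. le x a \<and> \<not> le a x} | a. a \<in> S}))"

text \<open>The ordinal beta*j+1, where beta is the order type of the well-order r:
j consecutive copies of beta (copy i consists of the points Inl (i, x)),
ordered lexicographically with the copy index first, followed by a top point Inr ().\<close>
definition ord_mult_succ_carrier :: "'a rel \<Rightarrow> nat \<Rightarrow> ((nat \<times> 'a) + unit) set" where
  "ord_mult_succ_carrier r j = {Inl (i, x) | i x. i < j \<and> x \<in> Field r} \<union> {Inr ()}"

definition ord_mult_succ_le :: "'a rel \<Rightarrow> ((nat \<times> 'a) + unit) \<Rightarrow> ((nat \<times> 'a) + unit) \<Rightarrow> bool" where
  "ord_mult_succ_le r p q = (case (p, q) of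
      (_, Inr _) \<Rightarrow> True
    | (Inr _, Inl _) \<Rightarrow> False
    | (Inl (i, x), Inl (i', y)) \<Rightarrow> i < i' \<or> (i = i' \<and> (x, y) \<in> r))"

definition ord_mult_succ_space :: "'a rel \<Rightarrow> nat \<Rightarrow> ((nat \<times> 'a) + unit) topology" where
  "ord_mult_succ_space r j = order_topology_on (ord_mult_succ_carrier r j) (ord_mult_succ_le r)"

end

theory Submission
  imports Defs
begin

unbundle cardinal_syntax

text \<open>
  Suppose \<open>f : \<beta>\<cdot>j+1 \<rightarrow> \<beta>\<cdot>k+1\<close> is continuous and cleaves the following set \<open>A\<close>:
  the block ends \<open>\<beta>\<cdot>1, \<dots>, \<beta>\<cdot>j\<close> lie alternately outside and inside \<open>A\<close>, and among the
  other points of the block \<open>[\<beta>\<cdot>i, \<beta>\<cdot>(i+1))\<close>, \<open>A\<close> contains the successors if \<open>i < 2\<close> and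
  the limits if \<open>i \<ge> 2\<close>. Since \<open>f\<close> separates points of different marking, points of
  block \<open>i\<close> are mapped cofinally often strictly below \<open>f(\<beta>\<cdot>(i+1))\<close>; by regularity of
  \<open>\<beta>\<close> this forces \<open>f(\<beta>\<cdot>(i+1))\<close> to be a block end of \<open>\<beta>\<cdot>k+1\<close>. By pigeonhole two block
  ends \<open>\<beta>\<cdot>(i+1) \<noteq> \<beta>\<cdot>(i'+1)\<close> have the same image, so they have the same marking and
  \<open>i, i'\<close> have the same parity, hence one is \<open>< 2\<close> and the other is not. Interleaving
  sequences in blocks \<open>i\<close> and \<open>i'\<close> (possible because \<open>cf(\<beta>) > \<omega>\<close>) and using continuity at
  their suprema yields two limit points, in blocks \<open>i\<close> and \<open>i'\<close>, with equal images but
  different markings: a contradiction.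
\<close>

lemma topspace_order_topology_on [simp]: "topspace (order_topology_on S le) = S"
  unfolding order_topology_on_def topology_generated_by_topspace by auto

lemma openin_order_topology_on_carrier: "openin (order_topology_on S le) S"
  unfolding order_topology_on_def by (rule topology_generated_by_Basis) simp

lemma openin_order_topology_on_above:
  "a \<in> S \<Longrightarrow> openin (order_topology_on S le) {x \<in> S. le a x \<and> \<not> le x a}"
  unfolding order_topology_on_def by (rule topology_generated_by_Basis) blast

lemma openin_order_topology_on_below:
  "a \<in> S \<Longrightarrow> openin (order_topology_on S le) {x \<in> S. le x a \<and> \<not> le a x}"
  unfolding order_topology_on_def by (rule topology_generated_by_Basis) blast

lemma order_topology_on_left_nbhd:
  fixes S :: "'a set" and le :: "'a \<Rightarrow> 'a \<Rightarrow> bool"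
  defines "lt x y \<equiv> le x y \<and> \<not> le y x"
  assumes trans: "\<And>x y z. x \<in> S \<Longrightarrow> y \<in> S \<Longrightarrow> z \<in> S \<Longrightarrow> le x y \<Longrightarrow> le y z \<Longrightarrow> le x z"
    and total: "\<And>x y. x \<in> S \<Longrightarrow> y \<in> S \<Longrightarrow> le x y \<or> le y x"
    and U: "openin (order_topology_on S le) U" and p: "p \<in> U"
    and c0: "c0 \<in> S" "lt c0 p"
  shows "\<exists>c\<in>S. lt c p \<and> {q \<in> S. lt c q \<and> le q p} \<subseteq> U"
proof -
  have le_lt_trans: "lt a c" if "a \<in> S" "b \<in> S" "c \<in> S" "le a b" "lt b c" for a b c
    using that trans unfolding lt_def by blast
  have "p \<in> S" using U p openin_subset by fastforce
  have "generate_topology_on (insert S ({{x \<in> S. lt a x} | a. a \<in> S} \<union>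
      {{x \<in> S. lt x a} | a. a \<in> S})) U"
    using U unfolding order_topology_on_def openin_topology_generated_by_iff lt_def .
  then show ?thesis using p \<open>p \<in> S\<close> c0
  proof (induction arbitrary: p c0)
    case Empty
    then show ?case by simp
  next
    case (Int U1 U2)
    obtain c1 where c1: "c1 \<in> S" "lt c1 p" "{q \<in> S. lt c1 q \<and> le q p} \<subseteq> U1"
      using Int.IH(1) Int.prems by blast
    obtain c2 where c2: "c2 \<in> S" "lt c2 p" "{q \<in> S. lt c2 q \<and> le q p} \<subseteq> U2"
      using Int.IH(2) Int.prems by blast
    from total[OF c1(1) c2(1)] show ?case
    proof
      assume "le c1 c2"
      then show ?case using c1 c2 le_lt_trans by blast
    next
      assume "le c2 c1"
      then show ?case using c1 c2 le_lt_trans by blast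
    qed
  next
    case (UN K)
    then obtain V where "V \<in> K" "p \<in> V" by blast
    then show ?case using UN.IH[of V p c0] UN.prems by blast
  next
    case (Basis V)
    then consider "V = S" | a where "a \<in> S" "V = {x \<in> S. lt a x}"
      | a where "a \<in> S" "V = {x \<in> S. lt x a}" by blast
    then show ?case
    proof cases
      case 3
      then show ?thesis using Basis.prems le_lt_trans by blast
    qed (use Basis.prems in blast)+
  qed
qed

lemma transp_chain:
  assumes "transp R" and "\<And>n. R (a n) (a (Suc n))" and "n < m"
  shows "R (a n) (a m)"
  using assms(3)
proof (induction n m rule: less_Suc_induct)
  case (1 i)
  then show ?case using assms(2) .
next
  case (2 i j k)
  then show ?case using assms(1) by (blast dest: transpD)
qed

lemma cleavable_separating_map:
  assumes "cleavable X Y" and "A \<subseteq> topspace X"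
  obtains f where "continuous_map X Y f"
    "\<And>p q. p \<in> topspace X \<Longrightarrow> q \<in> topspace X \<Longrightarrow> f p = f q \<Longrightarrow> p \<in> A \<longleftrightarrow> q \<in> A"
proof -
  obtain f where f: "continuous_map X Y f" "f ` A \<inter> f ` (topspace X - A) = {}"
    using assms unfolding cleavable_def by blast
  have "p \<in> A \<longleftrightarrow> q \<in> A" if "p \<in> topspace X" "q \<in> topspace X" "f p = f q" for p q
    using f(2) that by blast
  then show thesis using that f(1) by blast
qed

locale uncountable_regular =
  fixes r :: "'a rel"
  assumes card_order: "Card_order r" and regular: "regularCard r"
    and uncountable: "\<not> countable (Field r)"
begin

abbreviation F where "F \<equiv> Field r"

definition less_r :: "'a \<Rightarrow> 'a \<Rightarrow> bool" where
  "less_r x y \<longleftrightarrow> (x, y) \<in> r \<and> x \<noteq> y"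

lemma wo_rel_r: "wo_rel r"
  using card_order unfolding card_order_on_def wo_rel_def by simp

lemma r_refl: "x \<in> F \<Longrightarrow> (x, x) \<in> r"
  using wo_rel.REFL[OF wo_rel_r] unfolding refl_on_def by blast

lemma r_trans: "(x, y) \<in> r \<Longrightarrow> (y, z) \<in> r \<Longrightarrow> (x, z) \<in> r"
  using wo_rel.TRANS[OF wo_rel_r] unfolding trans_def by blast

lemma r_antisym: "(x, y) \<in> r \<Longrightarrow> (y, x) \<in> r \<Longrightarrow> x = y"
  using wo_rel.ANTISYM[OF wo_rel_r] unfolding antisym_def by blast

lemma r_total: "x \<in> F \<Longrightarrow> y \<in> F \<Longrightarrow> (x, y) \<in> r \<or> (y, x) \<in> r"
  using wo_rel.TOTALS[OF wo_rel_r] by blast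

lemma less_r_Field: "less_r x y \<Longrightarrow> x \<in> F \<and> y \<in> F"
  unfolding less_r_def by (blast intro: FieldI1 FieldI2)

lemma less_r_trans: "less_r x y \<Longrightarrow> less_r y z \<Longrightarrow> less_r x z"
  and less_r_le_trans: "less_r x y \<Longrightarrow> (y, z) \<in> r \<Longrightarrow> less_r x z"
  and le_less_r_trans: "(x, y) \<in> r \<Longrightarrow> less_r y z \<Longrightarrow> less_r x z"
  unfolding less_r_def using r_trans r_antisym by blast+

lemma less_r_not_le: "less_r x y \<Longrightarrow> (y, x) \<notin> r"
  unfolding less_r_def using r_antisym by blast

lemma not_less_r: "x \<in> F \<Longrightarrow> y \<in> F \<Longrightarrow> \<not> less_r x y \<Longrightarrow> (y, x) \<in> r"
  unfolding less_r_def using r_total r_refl by blast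

lemma has_least: "Q \<subseteq> F \<Longrightarrow> Q \<noteq> {} \<Longrightarrow> \<exists>z\<in>Q. \<forall>y\<in>Q. (z, y) \<in> r"
  using wo_rel.Well_order_isMinim_exists[OF wo_rel_r] unfolding wo_rel.isMinim_def[OF wo_rel_r] by blast

lemma common_upper_bound: "a \<in> F \<Longrightarrow> b \<in> F \<Longrightarrow> \<exists>m\<in>F. (a, m) \<in> r \<and> (b, m) \<in> r"
  using r_total r_refl by blast

lemma no_greatest: "a \<in> F \<Longrightarrow> \<exists>b\<in>F. less_r a b"
  using infinite_Card_order_limit[OF card_order] uncountable_infinite[OF uncountable]
  unfolding less_r_def by blast

lemma small_subset_bounded:
  assumes "T \<subseteq> F" and "|T| <o r"
  shows "\<exists>c\<in>F. \<forall>t\<in>T. less_r t c"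
proof -
  have "\<not> cofinal T r"
  proof
    assume "cofinal T r"
    then have "|T| =o r" using regular assms(1) unfolding regularCard_def by blast
    then show False using assms(2) not_ordLess_ordIso by blast
  qed
  then obtain a where a: "a \<in> F" "\<forall>b\<in>T. a = b \<or> (a, b) \<notin> r"
    unfolding cofinal_def by blast
  have "(t, a) \<in> r" if t: "t \<in> T" for t
    using a t assms(1) r_total[of t a] r_refl[of a] by (metis subsetD)
  moreover obtain c where "c \<in> F" "less_r a c"
    using no_greatest a(1) by blast
  ultimately show ?thesis using le_less_r_trans by blast
qed

lemma countable_subset_bounded:
  assumes "T \<subseteq> F" and "countable T"
  shows "\<exists>c\<in>F. \<forall>t\<in>T. less_r t c"
proof -
  have countable_iff: "countable A \<longleftrightarrow> |A| \<le>o |UNIV :: nat set|" for A :: "'a set"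
    unfolding countable_def card_of_ordLeq[symmetric] by auto
  have "|T| \<le>o |UNIV :: nat set|"
    using assms(2) countable_iff by blast
  also have "|UNIV :: nat set| <o |F|"
    using uncountable countable_iff
      not_ordLeq_iff_ordLess[OF card_of_Well_order card_of_Well_order] by blast
  also have "|F| =o r"
    using card_of_Field_ordIso card_order by blast
  finally have "|T| <o r" .
  then show ?thesis using small_subset_bounded assms(1) by blast
qed

definition zero_r :: 'a where
  "zero_r = (SOME z. z \<in> F \<and> (\<forall>x\<in>F. (z, x) \<in> r))"

lemma zero_r: "zero_r \<in> F" "x \<in> F \<Longrightarrow> (zero_r, x) \<in> r"
proof -
  have "F \<noteq> {}" using uncountable by auto
  then have "\<exists>z. z \<in> F \<and> (\<forall>x\<in>F. (z, x) \<in> r)" using has_least[of F] by blast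
  then have "zero_r \<in> F \<and> (\<forall>x\<in>F. (zero_r, x) \<in> r)"
    unfolding zero_r_def by (rule someI_ex)
  then show "zero_r \<in> F" "x \<in> F \<Longrightarrow> (zero_r, x) \<in> r" by auto
qed

lemma not_less_zero_r: "\<not> less_r x zero_r"
  using zero_r less_r_Field less_r_not_le by blast

definition is_succ :: "'a \<Rightarrow> bool" where
  "is_succ u \<longleftrightarrow> (\<exists>w. less_r w u \<and> \<not> (\<exists>v. less_r w v \<and> less_r v u))"

lemma immediate_successor:
  assumes x: "x \<in> F"
  obtains x' where "x' \<in> F" "less_r x x'" "\<And>z. z \<in> F \<Longrightarrow> less_r z x' \<longleftrightarrow> (z, x) \<in> r"
proof -
  obtain x' where x': "x' \<in> F" "less_r x x'" "\<forall>y\<in>{b\<in>F. less_r x b}. (x', y) \<in> r"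
    using has_least[of "{b\<in>F. less_r x b}"] no_greatest[OF x] by blast
  have "less_r z x' \<longleftrightarrow> (z, x) \<in> r" if z: "z \<in> F" for z
  proof
    assume "less_r z x'"
    then have "(x', z) \<notin> r" by (rule less_r_not_le)
    then show "(z, x) \<in> r" using x'(3) z not_less_r[OF x z] by blast
  next
    assume "(z, x) \<in> r"
    then show "less_r z x'" using x'(2) le_less_r_trans by blast
  qed
  then show thesis using that x' by blast
qed

lemma successors_cofinal: "t \<in> F \<Longrightarrow> \<exists>u\<in>F. less_r t u \<and> is_succ u"
proof -
  assume t: "t \<in> F"
  obtain u where u: "u \<in> F" "less_r t u" "\<And>z. z \<in> F \<Longrightarrow> less_r z u \<longleftrightarrow> (z, t) \<in> r"
    using immediate_successor[OF t] by blast
  have "\<not> (less_r t v \<and> less_r v u)" for v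
    using u(3) less_r_Field less_r_not_le by blast
  then have "is_succ u"
    unfolding is_succ_def using u(2) by blast
  then show ?thesis using u by blast
qed

text \<open>Every strictly increasing \<open>\<omega>\<close>-sequence in \<open>\<beta>\<close> has a supremum in \<open>\<beta>\<close> (because
  \<open>cf(\<beta>) > \<omega>\<close>), and this supremum is a limit ordinal.\<close>

lemma omega_sup:
  assumes s: "\<And>n. s n \<in> F" and inc: "\<And>n. less_r (s n) (s (Suc n))"
  obtains \<xi> where "\<xi> \<in> F" "\<And>n. less_r (s n) \<xi>" "\<And>t. less_r t \<xi> \<Longrightarrow> \<exists>n. less_r t (s n)"
    "\<not> is_succ \<xi>"
proof -
  let ?U = "{u\<in>F. \<forall>n. (s n, u) \<in> r}"
  obtain c where "c \<in> F" "\<forall>t\<in>range s. less_r t c"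
    using countable_subset_bounded[of "range s"] s by blast
  then have "c \<in> ?U" unfolding less_r_def by blast
  then obtain \<xi> where \<xi>: "\<xi> \<in> ?U" "\<forall>y\<in>?U. (\<xi>, y) \<in> r"
    using has_least[of ?U] by blast
  have above: "less_r (s n) \<xi>" for n
    using \<xi>(1) inc less_r_le_trans by blast
  have approx: "\<exists>n. less_r t (s n)" if t: "less_r t \<xi>" for t
  proof (rule ccontr)
    assume "\<nexists>n. less_r t (s n)"
    then have "t \<in> ?U" using t s not_less_r less_r_Field by blast
    then show False using \<xi>(2) t less_r_not_le by blast
  qed
  have "\<not> is_succ \<xi>"
    unfolding is_succ_def using above approx by blast
  then show thesis using that \<xi>(1) above approx by blast
qed

lemma limits_cofinal:
  assumes t: "t \<in> F"
  shows "\<exists>u\<in>F. less_r t u \<and> \<not> is_succ u"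
proof -
  obtain next_r where next_r: "\<And>x. x \<in> F \<Longrightarrow> next_r x \<in> F \<and> less_r x (next_r x)"
    using no_greatest by metis
  define s where "s n = (next_r ^^ n) t" for n
  have s: "s n \<in> F" for n
    by (induction n) (simp_all add: s_def t next_r)
  have "less_r (s n) (s (Suc n))" for n
    using next_r[OF s] by (simp add: s_def)
  then obtain \<xi> where "\<xi> \<in> F" "less_r (s 0) \<xi>" "\<not> is_succ \<xi>"
    using omega_sup[of s] s by metis
  then show ?thesis by (auto simp: s_def)
qed

abbreviation pts :: "nat \<Rightarrow> ((nat \<times> 'a) + unit) set" where
  "pts n \<equiv> ord_mult_succ_carrier r n"

abbreviation leq :: "(nat \<times> 'a) + unit \<Rightarrow> (nat \<times> 'a) + unit \<Rightarrow> bool" where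
  "leq \<equiv> ord_mult_succ_le r"

abbreviation ordspace :: "nat \<Rightarrow> ((nat \<times> 'a) + unit) topology" where
  "ordspace n \<equiv> ord_mult_succ_space r n"

definition less_pt :: "(nat \<times> 'a) + unit \<Rightarrow> (nat \<times> 'a) + unit \<Rightarrow> bool" where
  "less_pt p q \<longleftrightarrow> leq p q \<and> \<not> leq q p"

lemma pt_cases: obtains i x where "p = Inl (i, x)" | "p = Inr ()"
  by (cases p) auto

lemma leq_simps [simp]:
  "leq (Inl (i, x)) (Inl (i', y)) \<longleftrightarrow> i < i' \<or> (i = i' \<and> (x, y) \<in> r)"
  "leq p (Inr u)"
  "\<not> leq (Inr u) (Inl q)"
  unfolding ord_mult_succ_le_def by (cases p; auto)+

lemma pts_simps [simp]:
  "Inl (i, x) \<in> pts n \<longleftrightarrow> i < n \<and> x \<in> F"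
  "Inr u \<in> pts n"
  unfolding ord_mult_succ_carrier_def by auto

lemma less_pt_simps [simp]:
  "less_pt (Inl (i, x)) (Inl (i', y)) \<longleftrightarrow> i < i' \<or> (i = i' \<and> less_r x y)"
  "less_pt (Inl q) (Inr u)"
  "\<not> less_pt (Inr u) p"
  unfolding less_pt_def less_r_def using r_antisym by (auto elim: pt_cases[of p])

lemma leq_trans: "leq p q \<Longrightarrow> leq q s \<Longrightarrow> leq p s"
  by (cases p rule: pt_cases; cases q rule: pt_cases; cases s rule: pt_cases) (auto intro: r_trans)

lemma leq_antisym: "leq p q \<Longrightarrow> leq q p \<Longrightarrow> p = q"
  by (cases p rule: pt_cases; cases q rule: pt_cases) (auto intro: r_antisym)

lemma leq_total: "p \<in> pts n \<Longrightarrow> q \<in> pts n \<Longrightarrow> leq p q \<or> leq q p"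
  by (cases p rule: pt_cases; cases q rule: pt_cases) (auto dest: r_total)

lemma leq_refl: "p \<in> pts n \<Longrightarrow> leq p p"
  by (cases p rule: pt_cases) (auto intro: r_refl)

lemma less_pt_imp_leq: "less_pt p q \<Longrightarrow> leq p q"
  and less_pt_not_leq: "less_pt p q \<Longrightarrow> \<not> leq q p"
  and less_pt_trans: "less_pt p q \<Longrightarrow> less_pt q s \<Longrightarrow> less_pt p s"
  unfolding less_pt_def using leq_trans by blast+

lemma leq_neq_less_pt: "leq p q \<Longrightarrow> p \<noteq> q \<Longrightarrow> less_pt p q"
  unfolding less_pt_def using leq_antisym by blast

lemma not_less_pt: "p \<in> pts n \<Longrightarrow> q \<in> pts n \<Longrightarrow> \<not> less_pt p q \<Longrightarrow> leq q p"
  unfolding less_pt_def using leq_total by blast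

lemma topspace_ordspace [simp]: "topspace (ordspace n) = pts n"
  unfolding ord_mult_succ_space_def by simp

lemma open_above: "a \<in> pts n \<Longrightarrow> openin (ordspace n) {x \<in> pts n. less_pt a x}"
  unfolding ord_mult_succ_space_def less_pt_def by (rule openin_order_topology_on_above)

lemma open_below: "a \<in> pts n \<Longrightarrow> openin (ordspace n) {x \<in> pts n. less_pt x a}"
  unfolding ord_mult_succ_space_def less_pt_def by (rule openin_order_topology_on_below)

text \<open>Every point has an immediate successor or is the top point, so closed initial
  segments \<open>[0, y]\<close> are open.\<close>

lemma open_initial_segment:
  assumes y: "y \<in> pts n"
  shows "openin (ordspace n) {w \<in> pts n. leq w y}"
proof (cases y rule: pt_cases)
  case (1 m x)
  then have "m < n" "x \<in> F" using y by auto
  then obtain x' where x': "x' \<in> F" "less_r x x'" "\<And>z. z \<in> F \<Longrightarrow> less_r z x' \<longleftrightarrow> (z, x) \<in> r"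
    using immediate_successor by blast
  have "{w \<in> pts n. leq w y} = {w \<in> pts n. less_pt w (Inl (m, x'))}"
  proof (intro Collect_cong conj_cong refl)
    fix w assume "w \<in> pts n"
    then show "leq w y = less_pt w (Inl (m, x'))"
      using x' 1 by (cases w rule: pt_cases) auto
  qed
  then show ?thesis using open_below[of "Inl (m, x')" n] \<open>m < n\<close> x' by simp
next
  case 2
  then have "{w \<in> pts n. leq w y} = pts n" by auto
  then show ?thesis using openin_order_topology_on_carrier
    unfolding ord_mult_succ_space_def by simp
qed

lemma open_interval:
  assumes "b \<in> pts n" "y \<in> pts n"
  shows "openin (ordspace n) {w \<in> pts n. less_pt b w \<and> leq w y}"
proof -
  have "{w \<in> pts n. less_pt b w \<and> leq w y} = {w \<in> pts n. less_pt b w} \<inter> {w \<in> pts n. leq w y}"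
    by blast
  then show ?thesis using openin_Int[OF open_above open_initial_segment] assms by simp
qed

lemma left_nbhd:
  assumes "openin (ordspace n) U" "p \<in> U" "c0 \<in> pts n" "less_pt c0 p"
  shows "\<exists>c\<in>pts n. less_pt c p \<and> {q \<in> pts n. less_pt c q \<and> leq q p} \<subseteq> U"
proof -
  have "openin (order_topology_on (pts n) leq) U" "leq c0 p \<and> \<not> leq p c0"
    using assms(1,4) unfolding ord_mult_succ_space_def less_pt_def by auto
  from order_topology_on_left_nbhd[OF leq_trans leq_total this(1) assms(2,3) this(2)]
  show ?thesis unfolding less_pt_def .
qed

text \<open>The block end \<open>\<beta>\<cdot>(i+1)\<close> of \<open>\<beta>\<cdot>j+1\<close>, for \<open>i < j\<close>: the first point of block
  \<open>i+1\<close>, or the top point if \<open>i+1 = j\<close>.\<close>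

definition block_end :: "nat \<Rightarrow> nat \<Rightarrow> (nat \<times> 'a) + unit" where
  "block_end j i = (if Suc i < j then Inl (Suc i, zero_r) else Inr ())"

lemma block_end_pts: "block_end j i \<in> pts j"
  unfolding block_end_def using zero_r by auto

lemma block_below_end: "leq (Inl (i, u)) (block_end j i)"
  unfolding block_end_def by auto

lemma block_end_nbhd:
  assumes i: "i < j" and U: "openin (ordspace j) U" "block_end j i \<in> U"
  shows "\<exists>t\<in>F. \<forall>u\<in>F. less_r t u \<longrightarrow> Inl (i, u) \<in> U"
proof -
  have "Inl (i, zero_r) \<in> pts j" "less_pt (Inl (i, zero_r)) (block_end j i)"
    using i zero_r unfolding block_end_def by auto
  then obtain c where c: "c \<in> pts j" "less_pt c (block_end j i)"
    "{q \<in> pts j. less_pt c q \<and> leq q (block_end j i)} \<subseteq> U"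
    using left_nbhd U by blast
  obtain i' t' where c_eq: "c = Inl (i', t')" "t' \<in> F" "i' \<le> i"
    using c(1,2) not_less_zero_r unfolding block_end_def
    by (cases c rule: pt_cases) (auto split: if_splits)
  define t where "t = (if i' = i then t' else zero_r)"
  have "Inl (i, u) \<in> U" if "u \<in> F" "less_r t u" for u
  proof -
    have "less_pt c (Inl (i, u))"
      using c_eq that unfolding t_def by (auto split: if_splits)
    then show ?thesis using c(3) that(1) i block_below_end[of i u j] by auto
  qed
  moreover have "t \<in> F" unfolding t_def using c_eq zero_r by simp
  ultimately show ?thesis by blast
qed

lemma sup_nbhd:
  fixes s :: "nat \<Rightarrow> 'a"
  assumes i: "i < j" and \<xi>: "\<And>n. less_r (s n) \<xi>" "\<And>t. less_r t \<xi> \<Longrightarrow> \<exists>n. less_r t (s n)"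
    and U: "openin (ordspace j) U" "Inl (i, \<xi>) \<in> U" and t: "less_r t \<xi>"
  shows "\<exists>m. less_r t (s m) \<and> Inl (i, s m) \<in> U"
proof -
  have "Inl (i, s 0) \<in> pts j" "less_pt (Inl (i, s 0)) (Inl (i, \<xi>))"
    using i \<xi>(1) less_r_Field by auto
  then obtain c where c: "c \<in> pts j" "less_pt c (Inl (i, \<xi>))"
    "{q \<in> pts j. less_pt c q \<and> leq q (Inl (i, \<xi>))} \<subseteq> U"
    using left_nbhd U by blast
  obtain m where m: "less_r t (s m)" "less_pt c (Inl (i, s m))"
  proof (cases c rule: pt_cases)
    case (1 i' t')
    have "i' < i \<or> (i' = i \<and> less_r t' \<xi>)" using c(2) 1 by simp
    then show thesis
    proof
      assume "i' < i"
      then show thesis using that \<xi>(2)[OF t] 1 by auto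
    next
      assume i': "i' = i \<and> less_r t' \<xi>"
      have "t' \<in> F" "t \<in> F" using c(1) 1 t less_r_Field by auto
      obtain tm where "less_r tm \<xi>" "(t', tm) \<in> r" "(t, tm) \<in> r"
      proof (cases "(t', t) \<in> r")
        case True
        then show thesis using that[of t] t r_refl[OF \<open>t \<in> F\<close>] by blast
      next
        case False
        then have "(t, t') \<in> r" using r_total[OF \<open>t' \<in> F\<close> \<open>t \<in> F\<close>] by blast
        then show thesis using that[of t'] i' r_refl[OF \<open>t' \<in> F\<close>] by blast
      qed
      then obtain m where "less_r tm (s m)" using \<xi>(2) by blast
      then show thesis using that i' 1 \<open>(t', tm) \<in> r\<close> \<open>(t, tm) \<in> r\<close> le_less_r_trans by auto
    qed
  qed (use c(2) in simp)
  have "Inl (i, s m) \<in> pts j" "leq (Inl (i, s m)) (Inl (i, \<xi>))"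
    using i \<xi>(1)[of m] less_r_Field unfolding less_r_def by auto
  then show ?thesis using c(3) m by blast
qed

lemma small_cofinal_set_below:
  assumes y: "y \<in> pts k" "y \<notin> block_end k ` {..<k}"
  obtains D where "|D| <o r" "D \<subseteq> pts k" "\<And>d. d \<in> D \<Longrightarrow> less_pt d y"
    "\<And>w. w \<in> pts k \<Longrightarrow> less_pt w y \<Longrightarrow> \<exists>d\<in>D. leq w d"
proof (cases y rule: pt_cases)
  case (1 m x0)
  have "m < k" "x0 \<in> F" using y(1) 1 by auto
  have x0: "x0 \<noteq> zero_r" if "0 < m"
  proof
    assume "x0 = zero_r"
    then have "y = block_end k (m - 1)" using 1 that \<open>m < k\<close> unfolding block_end_def by simp
    then show False using y(2) \<open>m < k\<close> by auto
  qed
  define D :: "((nat \<times> 'a) + unit) set" where "D = (\<lambda>z. Inl (m, z)) ` underS r x0"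
  have "|D| \<le>o |underS r x0|" unfolding D_def by (rule card_of_image)
  then have "|D| <o r"
    using card_of_underS[OF card_order \<open>x0 \<in> F\<close>] ordLeq_ordLess_trans by blast
  moreover have "D \<subseteq> pts k"
    using \<open>m < k\<close> unfolding D_def underS_def by (auto intro: FieldI1)
  moreover have "less_pt d y" if "d \<in> D" for d
    using that 1 unfolding D_def underS_def by (auto simp: less_r_def)
  moreover have "\<exists>d\<in>D. leq w d" if w: "w \<in> pts k" "less_pt w y" for w
  proof -
    obtain m' w' where w_eq: "w = Inl (m', w')" "w' \<in> F"
      using w by (cases w rule: pt_cases) auto
    have "m' < m \<or> (m' = m \<and> less_r w' x0)" using w(2) w_eq 1 by simp
    then show ?thesis
    proof
      assume "m' < m"
      then have "Inl (m, zero_r) \<in> D"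
        using x0 zero_r \<open>x0 \<in> F\<close> unfolding D_def underS_def by auto
      then show ?thesis using w_eq \<open>m' < m\<close> by force
    next
      assume "m' = m \<and> less_r w' x0"
      then have "w \<in> D" using w_eq unfolding D_def underS_def less_r_def by auto
      then show ?thesis using leq_refl w(1) by blast
    qed
  qed
  ultimately show thesis using that by blast
next
  case 2
  have "k = 0"
  proof (rule ccontr)
    assume "k \<noteq> 0"
    then have "y = block_end k (k - 1)" using 2 unfolding block_end_def by simp
    then show False using y(2) \<open>k \<noteq> 0\<close> by auto
  qed
  have "\<not> less_pt w y" if "w \<in> pts k" for w
    using that 2 \<open>k = 0\<close> by (cases w rule: pt_cases) auto
  moreover have "|{} :: ((nat \<times> 'a) + unit) set| <o r"
    using ordLeq_ordLess_trans[OF card_of_empty card_of_underS[OF card_order zero_r(1)]] .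
  ultimately show thesis using that[of "{}"] by blast
qed

text \<open>The set \<open>A \<subseteq> \<beta>\<cdot>j+1\<close> that cannot be cleaved: a point \<open>\<beta>\<cdot>i\<close> is in \<open>A\<close> iff \<open>i\<close> is
  even, so the block ends \<open>\<beta>\<cdot>1, \<dots>, \<beta>\<cdot>j\<close> alternate; any other point of block \<open>i\<close> is in
  \<open>A\<close> iff it is a successor (if \<open>i < 2\<close>) or a limit (if \<open>i \<ge> 2\<close>).\<close>

definition marked :: "nat \<Rightarrow> (nat \<times> 'a) + unit \<Rightarrow> bool" where
  "marked j p = (case p of
      Inl (i, u) \<Rightarrow> (if u = zero_r then even i else (is_succ u \<longleftrightarrow> i < 2))
    | Inr _ \<Rightarrow> even j)"

lemma marked_block_end:
  assumes "i < j"
  shows "marked j (block_end j i) \<longleftrightarrow> odd i"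
proof (cases "Suc i < j")
  case False
  then have "j = Suc i" using assms by simp
  then show ?thesis unfolding marked_def block_end_def by simp
qed (simp add: marked_def block_end_def)

lemma marked_inner: "u \<noteq> zero_r \<Longrightarrow> marked j (Inl (i, u)) \<longleftrightarrow> (is_succ u \<longleftrightarrow> i < 2)"
  unfolding marked_def by simp

end

locale continuous_ordinal_map = uncountable_regular r for r :: "'a rel" +
  fixes j k :: nat and f :: "(nat \<times> 'a) + unit \<Rightarrow> (nat \<times> 'a) + unit"
  assumes continuous: "continuous_map (ordspace j) (ordspace k) f"
begin

lemma maps_into: "p \<in> pts j \<Longrightarrow> f p \<in> pts k"
  using continuous unfolding continuous_map_def by auto

lemma preimage_open: "openin (ordspace k) V \<Longrightarrow> openin (ordspace j) {x \<in> pts j. f x \<in> V}"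
  using continuous unfolding continuous_map_def by auto

lemma tail_maps_into:
  assumes i: "i < j" and V: "openin (ordspace k) V" "f (block_end j i) \<in> V"
  shows "\<exists>t\<in>F. \<forall>u\<in>F. less_r t u \<longrightarrow> f (Inl (i, u)) \<in> V"
  using block_end_nbhd[OF i preimage_open[OF V(1)]] V(2) block_end_pts by blast

context
  fixes i :: nat and s :: "nat \<Rightarrow> 'a" and \<xi> :: 'a
  assumes i: "i < j" and s: "\<And>n. s n \<in> F" "\<And>n. less_r (s n) (s (Suc n))"
    and image_mono: "\<And>n. leq (f (Inl (i, s n))) (f (Inl (i, s (Suc n))))"
    and \<xi>: "\<xi> \<in> F" "\<And>n. less_r (s n) \<xi>" "\<And>t. less_r t \<xi> \<Longrightarrow> \<exists>n. less_r t (s n)"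
begin

lemma image_at_sup_pts: "f (Inl (i, \<xi>)) \<in> pts k" "f (Inl (i, s n)) \<in> pts k"
  using maps_into i \<xi>(1) s(1) by auto

lemma image_at_sup_upper: "leq (f (Inl (i, s n))) (f (Inl (i, \<xi>)))"
proof (rule ccontr)
  let ?a = "\<lambda>n. f (Inl (i, s n))"
  assume "\<not> leq (?a n) (f (Inl (i, \<xi>)))"
  then have "f (Inl (i, \<xi>)) \<in> {v \<in> pts k. less_pt v (?a n)}"
    using not_less_pt image_at_sup_pts by blast
  then obtain m where m: "less_r (s n) (s m)" "less_pt (?a m) (?a n)"
    using sup_nbhd[OF i \<xi>(2,3) preimage_open[OF open_below[OF image_at_sup_pts(2)]]] \<xi>(2) i \<xi>(1)
    by fastforce
  have "n < m"
  proof (rule ccontr)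
    assume "\<not> n < m"
    then have "m < n \<or> m = n" by auto
    then show False
      using m(1) transp_chain[of less_r s m n] s(2) less_r_trans less_r_not_le
      unfolding transp_def less_r_def by blast
  qed
  then have "leq (?a n) (?a m)"
    using transp_chain[of leq ?a n m] image_mono leq_trans unfolding transp_def by blast
  then show False using m(2) less_pt_not_leq by blast
qed

lemma image_at_sup_least:
  assumes w: "w \<in> pts k" "\<And>n. leq (f (Inl (i, s n))) w"
  shows "leq (f (Inl (i, \<xi>))) w"
proof (rule ccontr)
  assume "\<not> leq (f (Inl (i, \<xi>))) w"
  then have "f (Inl (i, \<xi>)) \<in> {v \<in> pts k. less_pt w v}"
    using not_less_pt image_at_sup_pts w(1) by blast
  then obtain m where "less_pt w (f (Inl (i, s m)))"
    using sup_nbhd[OF i \<xi>(2,3) preimage_open[OF open_above[OF w(1)]]] \<xi>(2) i \<xi>(1)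
    by fastforce
  then show False using w(2) less_pt_not_leq by blast
qed

end

end

locale cleaving_map = continuous_ordinal_map +
  assumes separates: "\<And>p q. p \<in> pts j \<Longrightarrow> q \<in> pts j \<Longrightarrow> f p = f q \<Longrightarrow> marked j p = marked j q"
begin

text \<open>Cofinally in block \<open>i\<close> there are points mapped strictly below the image of the
  block end: points of block \<open>i\<close> of the other marking than \<open>\<beta>\<cdot>(i+1)\<close> have images
  different from, and eventually at most, \<open>f(\<beta>\<cdot>(i+1))\<close>.\<close>

lemma dips_below_block_end:
  assumes i: "i < j" and t: "t \<in> F"
  shows "\<exists>u\<in>F. less_r t u \<and> less_pt (f (Inl (i, u))) (f (block_end j i))"
proof -
  let ?y = "f (block_end j i)"
  have y: "?y \<in> pts k" using maps_into block_end_pts by blast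
  then obtain t1 where t1: "t1 \<in> F" "\<forall>u\<in>F. less_r t1 u \<longrightarrow> leq (f (Inl (i, u))) ?y"
    using tail_maps_into[OF i open_initial_segment[OF y]] leq_refl by blast
  obtain m where m: "m \<in> F" "(t, m) \<in> r" "(t1, m) \<in> r"
    using common_upper_bound t t1(1) by blast
  obtain u where u: "u \<in> F" "less_r m u" "is_succ u \<longleftrightarrow> (even i \<longleftrightarrow> i < 2)"
    using successors_cofinal[OF m(1)] limits_cofinal[OF m(1)] by metis
  have "u \<noteq> zero_r" using u(2) not_less_zero_r by blast
  then have "marked j (Inl (i, u)) \<noteq> marked j (block_end j i)"
    using marked_inner marked_block_end[OF i] u(3) by auto
  then have "f (Inl (i, u)) \<noteq> ?y"
    using separates[of "Inl (i, u)" "block_end j i"] block_end_pts i u(1) by auto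
  moreover have "leq (f (Inl (i, u))) ?y"
    using t1 u m(3) le_less_r_trans by blast
  ultimately show ?thesis
    using leq_neq_less_pt u m(2) le_less_r_trans by blast
qed

lemma dips_into_interval:
  assumes i: "i < j" and x: "x \<in> F" and b: "b \<in> pts k" "less_pt b (f (block_end j i))"
  shows "\<exists>u\<in>F. less_r x u \<and> less_pt b (f (Inl (i, u))) \<and> less_pt (f (Inl (i, u))) (f (block_end j i))"
proof -
  let ?y = "f (block_end j i)"
  have y: "?y \<in> pts k" using maps_into block_end_pts by blast
  then obtain t1 where t1: "t1 \<in> F" "\<forall>u\<in>F. less_r t1 u \<longrightarrow> less_pt b (f (Inl (i, u)))"
    using tail_maps_into[OF i open_interval[OF b(1) y]] leq_refl b(2) by blast
  obtain m where m: "m \<in> F" "(x, m) \<in> r" "(t1, m) \<in> r"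
    using common_upper_bound x t1(1) by blast
  obtain u where "u \<in> F" "less_r m u" "less_pt (f (Inl (i, u))) ?y"
    using dips_below_block_end[OF i m(1)] by blast
  then show ?thesis using t1 m le_less_r_trans by blast
qed

text \<open>Since \<open>\<beta>\<close> is regular, \<open>f\<close> maps each block end of \<open>\<beta>\<cdot>j+1\<close> to a block end of
  \<open>\<beta>\<cdot>k+1\<close>: a point of smaller cofinality cannot be approached from below along
  block \<open>i\<close> in the required way.\<close>

lemma block_end_image:
  assumes i: "i < j"
  shows "f (block_end j i) \<in> block_end k ` {..<k}"
proof (rule ccontr)
  let ?y = "f (block_end j i)"
  assume "?y \<notin> block_end k ` {..<k}"
  moreover have y: "?y \<in> pts k" using maps_into block_end_pts by blast
  ultimately obtain D where D: "|D| <o r" "D \<subseteq> pts k" "\<And>d. d \<in> D \<Longrightarrow> less_pt d ?y"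
    "\<And>w. w \<in> pts k \<Longrightarrow> less_pt w ?y \<Longrightarrow> \<exists>d\<in>D. leq w d"
    using small_cofinal_set_below by blast
  have "\<forall>d\<in>D. \<exists>t. t \<in> F \<and> (\<forall>u\<in>F. less_r t u \<longrightarrow> less_pt d (f (Inl (i, u))))"
  proof
    fix d assume d: "d \<in> D"
    have "?y \<in> {w \<in> pts k. less_pt d w \<and> leq w ?y}"
      using y D(3)[OF d] leq_refl[OF y] by blast
    then obtain t where "t \<in> F" "\<forall>u\<in>F. less_r t u \<longrightarrow> less_pt d (f (Inl (i, u)))"
      using tail_maps_into[OF i open_interval[OF _ y], of d] D(2) d by blast
    then show "\<exists>t. t \<in> F \<and> (\<forall>u\<in>F. less_r t u \<longrightarrow> less_pt d (f (Inl (i, u))))" by blast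
  qed
  then obtain tail where tail: "\<And>d. d \<in> D \<Longrightarrow> tail d \<in> F"
    "\<And>d u. d \<in> D \<Longrightarrow> u \<in> F \<Longrightarrow> less_r (tail d) u \<Longrightarrow> less_pt d (f (Inl (i, u)))"
    by (auto dest!: bchoice)
  have "|tail ` D| <o r" using card_of_image ordLeq_ordLess_trans D(1) by blast
  then obtain c where c: "c \<in> F" "\<And>d. d \<in> D \<Longrightarrow> less_r (tail d) c"
    using small_subset_bounded[of "tail ` D"] tail(1) by blast
  obtain u where u: "u \<in> F" "less_r c u" "less_pt (f (Inl (i, u))) ?y"
    using dips_below_block_end[OF i c(1)] by blast
  have "f (Inl (i, u)) \<in> pts k" using maps_into i u(1) by simp
  then obtain d where "d \<in> D" "leq (f (Inl (i, u))) d"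
    using D(4) u(3) by blast
  moreover have "less_pt d (f (Inl (i, u)))"
    using tail(2) \<open>d \<in> D\<close> u(1) c(2) u(2) less_r_trans by blast
  ultimately show False using less_pt_not_leq by blast
qed

text \<open>Pigeonhole: \<open>\<beta>\<cdot>j+1\<close> has \<open>j\<close> block ends but \<open>\<beta>\<cdot>k+1\<close> only \<open>k < j\<close>.\<close>

lemma block_ends_collide:
  assumes "k < j"
  obtains i i' where "i < j" "i' < j" "i \<noteq> i'" "f (block_end j i) = f (block_end j i')"
proof -
  let ?g = "\<lambda>i. f (block_end j i)"
  have "card (?g ` {..<j}) \<le> card (block_end k ` {..<k})"
    using block_end_image by (intro card_mono) auto
  also have "\<dots> \<le> k" using card_image_le[of "{..<k}" "block_end k"] by simp
  finally have "\<not> inj_on ?g {..<j}" using assms card_image by fastforce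
  then show thesis using that unfolding inj_on_def by blast
qed

lemma interleaved_sequences:
  assumes i: "i < j" and i': "i' < j" and same: "f (block_end j i) = f (block_end j i')"
  obtains x y :: "nat \<Rightarrow> 'a" where "\<And>n. x n \<in> F" "\<And>n. y n \<in> F"
    "\<And>n. less_r (x n) (x (Suc n))" "\<And>n. less_r (y n) (y (Suc n))"
    "\<And>n. less_pt (f (Inl (i, x n))) (f (Inl (i', y n)))"
    "\<And>n. less_pt (f (Inl (i', y n))) (f (Inl (i, x (Suc n))))"
proof -
  let ?Y = "f (block_end j i)"
  define P where "P n p \<longleftrightarrow> fst p \<in> F \<and> snd p \<in> F \<and>
      less_pt (f (Inl (i, fst p))) (f (Inl (i', snd p))) \<and> less_pt (f (Inl (i', snd p))) ?Y"
    for n :: nat and p :: "'a \<times> 'a"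
  define Q where "Q n p p' \<longleftrightarrow> less_r (fst p) (fst p') \<and> less_r (snd p) (snd p') \<and>
      less_pt (f (Inl (i', snd p))) (f (Inl (i, fst p')))"
    for n :: nat and p p' :: "'a \<times> 'a"
  have "\<exists>p. P 0 p"
  proof -
    obtain x0 where x0: "x0 \<in> F" "less_pt (f (Inl (i, x0))) ?Y"
      using dips_below_block_end[OF i zero_r(1)] by blast
    have "f (Inl (i, x0)) \<in> pts k" using maps_into i x0(1) by simp
    then obtain y0 where "y0 \<in> F" "less_pt (f (Inl (i, x0))) (f (Inl (i', y0)))"
      "less_pt (f (Inl (i', y0))) ?Y"
      using dips_into_interval[OF i' zero_r(1)] x0(2) same by auto
    then have "P 0 (x0, y0)" using x0(1) unfolding P_def by simp
    then show ?thesis ..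
  qed
  moreover have "\<exists>p'. P (Suc n) p' \<and> Q n p p'" if "P n p" for n p
  proof -
    obtain x y where p: "p = (x, y)" by fastforce
    have x: "x \<in> F" and y: "y \<in> F" and xy: "less_pt (f (Inl (i', y))) ?Y"
      using that unfolding P_def p by simp_all
    have "f (Inl (i', y)) \<in> pts k" using maps_into i' y by simp
    then obtain x' where x': "x' \<in> F" "less_r x x'"
      "less_pt (f (Inl (i', y))) (f (Inl (i, x')))" "less_pt (f (Inl (i, x'))) ?Y"
      using dips_into_interval[OF i x] xy by blast
    have "f (Inl (i, x')) \<in> pts k" using maps_into i x'(1) by simp
    then obtain y' where "y' \<in> F" "less_r y y'"
      "less_pt (f (Inl (i, x'))) (f (Inl (i', y')))" "less_pt (f (Inl (i', y'))) ?Y"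
      using dips_into_interval[OF i' y] x'(4) same by auto
    then have "P (Suc n) (x', y') \<and> Q n p (x', y')"
      using x' unfolding P_def Q_def p by simp
    then show ?thesis ..
  qed
  ultimately obtain p where p: "\<And>n. P n (p n) \<and> Q n (p n) (p (Suc n))"
    using dependent_nat_choice[of P Q] by blast
  show thesis
    by (rule that[of "\<lambda>n. fst (p n)" "\<lambda>n. snd (p n)"]) (use p in \<open>simp_all add: P_def Q_def\<close>)
qed

text \<open>Hence two limit points, one in block \<open>i\<close> and one in block \<open>i'\<close>, have the same image:
  the suprema of the interleaved sequences.\<close>

lemma limits_with_equal_images:
  assumes i: "i < j" and i': "i' < j" and same: "f (block_end j i) = f (block_end j i')"
  obtains \<xi> \<eta> where "\<xi> \<in> F" "\<eta> \<in> F" "\<xi> \<noteq> zero_r" "\<eta> \<noteq> zero_r" "\<not> is_succ \<xi>" "\<not> is_succ \<eta>"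
    "f (Inl (i, \<xi>)) = f (Inl (i', \<eta>))"
proof -
  obtain x y where xF: "\<And>n. x n \<in> F" and yF: "\<And>n. y n \<in> F"
    and x_inc: "\<And>n. less_r (x n) (x (Suc n))" and y_inc: "\<And>n. less_r (y n) (y (Suc n))"
    and xy: "\<And>n. less_pt (f (Inl (i, x n))) (f (Inl (i', y n)))"
    and yx: "\<And>n. less_pt (f (Inl (i', y n))) (f (Inl (i, x (Suc n))))"
    using interleaved_sequences[OF assms] by metis
  obtain \<xi> where \<xi>: "\<xi> \<in> F" "\<And>n. less_r (x n) \<xi>" "\<And>t. less_r t \<xi> \<Longrightarrow> \<exists>n. less_r t (x n)"
    "\<not> is_succ \<xi>"
    by (rule omega_sup[of x, OF xF x_inc]) (rule that)
  obtain \<eta> where \<eta>: "\<eta> \<in> F" "\<And>n. less_r (y n) \<eta>" "\<And>t. less_r t \<eta> \<Longrightarrow> \<exists>n. less_r t (y n)"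
    "\<not> is_succ \<eta>"
    by (rule omega_sup[of y, OF yF y_inc]) (rule that)
  have x_mono: "leq (f (Inl (i, x n))) (f (Inl (i, x (Suc n))))" for n
    using less_pt_trans[OF xy yx] by (rule less_pt_imp_leq)
  have y_mono: "leq (f (Inl (i', y n))) (f (Inl (i', y (Suc n))))" for n
    using less_pt_trans[OF yx xy] by (rule less_pt_imp_leq)
  have "leq (f (Inl (i, \<xi>))) (f (Inl (i', \<eta>)))"
  proof (rule image_at_sup_least[OF i xF x_inc x_mono \<xi>(1-3)])
    show "f (Inl (i', \<eta>)) \<in> pts k" using maps_into i' \<eta>(1) by simp
    show "leq (f (Inl (i, x n))) (f (Inl (i', \<eta>)))" for n
      using less_pt_imp_leq[OF xy[of n]] image_at_sup_upper[OF i' yF y_inc y_mono \<eta>(1-3)]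
      by (rule leq_trans)
  qed
  moreover have "leq (f (Inl (i', \<eta>))) (f (Inl (i, \<xi>)))"
  proof (rule image_at_sup_least[OF i' yF y_inc y_mono \<eta>(1-3)])
    show "f (Inl (i, \<xi>)) \<in> pts k" using maps_into i \<xi>(1) by simp
    show "leq (f (Inl (i', y n))) (f (Inl (i, \<xi>)))" for n
      using less_pt_imp_leq[OF yx[of n]] image_at_sup_upper[OF i xF x_inc x_mono \<xi>(1-3)]
      by (rule leq_trans)
  qed
  ultimately have "f (Inl (i, \<xi>)) = f (Inl (i', \<eta>))" by (rule leq_antisym)
  moreover have "\<xi> \<noteq> zero_r" "\<eta> \<noteq> zero_r"
    using \<xi>(2)[of 0] \<eta>(2)[of 0] not_less_zero_r by auto
  ultimately show thesis using that \<xi>(1,4) \<eta>(1,4) by blast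
qed

text \<open>The contradiction: two block ends with equal images must have equal markings,
  so their indices have the same parity; being distinct and below \<open>4\<close>, one index is
  below \<open>2\<close> and the other is not, so the limits obtained above are marked differently.\<close>

theorem no_cleaving_map:
  assumes "j \<le> 4" and "k < j"
  shows False
proof -
  obtain i i' where ii: "i < j" "i' < j" "i \<noteq> i'" and same: "f (block_end j i) = f (block_end j i')"
    using block_ends_collide[OF assms(2)] by blast
  have "odd i \<longleftrightarrow> odd i'"
    using separates[OF block_end_pts block_end_pts same] marked_block_end ii by simp
  then have blocks: "i < 2 \<longleftrightarrow> \<not> i' < 2" using ii assms(1) by presburger
  obtain \<xi> \<eta> where "\<xi> \<in> F" "\<eta> \<in> F" "\<xi> \<noteq> zero_r" "\<eta> \<noteq> zero_r"
    "\<not> is_succ \<xi>" "\<not> is_succ \<eta>" and "f (Inl (i, \<xi>)) = f (Inl (i', \<eta>))"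
    using limits_with_equal_images[OF ii(1,2) same] by blast
  then show False
    using separates[of "Inl (i, \<xi>)" "Inl (i', \<eta>)"] marked_inner[of \<xi> j i]
      marked_inner[of \<eta> j i'] blocks ii by simp
qed

end

theorem lemma5p1:
  fixes r :: "'a rel" and j k :: nat
  assumes "Card_order r" and "regularCard r" and "\<not> countable (Field r)"
    and "j \<in> {2, 3, 4}" and "k < j"
  shows "\<not> cleavable (ord_mult_succ_space r j) (ord_mult_succ_space r k)"
proof
  assume cleavable: "cleavable (ord_mult_succ_space r j) (ord_mult_succ_space r k)"
  interpret uncountable_regular r using assms(1-3) by unfold_locales
  let ?A = "{p \<in> pts j. marked j p}"
  obtain f where continuous: "continuous_map (ordspace j) (ordspace k) f"
    and separates: "\<And>p q. p \<in> pts j \<Longrightarrow> q \<in> pts j \<Longrightarrow> f p = f q \<Longrightarrow> p \<in> ?A \<longleftrightarrow> q \<in> ?A"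
    using cleavable_separating_map[OF cleavable, of ?A] by auto
  interpret cleaving_map r j k f
  proof unfold_locales
    show "continuous_map (ordspace j) (ordspace k) f" by (rule continuous)
  next
    fix p q assume "p \<in> pts j" "q \<in> pts j" "f p = f q"
    then show "marked j p = marked j q" using separates by blast
  qed
  show False using no_cleaving_map assms(4,5) by auto
qed

end
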